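(* Let $\mathbf{u}$ be a $C^1$ unit vector field on $\mathbb{R}^2$ whose integral curves are straight lines, i.e. $\mathbf{u}(\mathbf{x}+t\mathbf{u}(\mathbf{x}))=\mathbf{u}(\mathbf{x})$ for all $\mathbf{x}$ and $t\ge0$. Let $\mathbf{f}\in C^2_c(S^1;\mathbb{D})$. Then the data $\mathcal{L}_0\mathbf{f}$ and $\mathcal{L}_0^1\mathbf{f}$ are equivalent (each determines the other), and the data $\mathcal{T}_0\mathbf{f}$ and $\mathcal{T}_0^1\mathbf{f}$ are equivalent.
   Context: $\mathbb{D}$ is the open unit disc in $\mathbb{R}^2$; $C_c^2(S^1;\mathbb{D})$ is the space of $C^2$ vector fields on $\mathbb{R}^2$ with compact support in $\mathbb{D}$. For $\mathbf{a}=(a_1,a_2)$, $\mathbf{a}^\perp=(-a_2,a_1)$. Define $\mathcal{L}_0\mathbf{f}(\mathbf{x})=-\int_0^\infty \mathbf{u}(\mathbf{x})\cdot\mathbf{f}(\mathbf{x}+t\mathbf{u}(\mathbf{x}))\,dt$, $\mathcal{T}_0\mathbf{f}(\mathbf{x})=-\int_0^\infty \mathbf{u}^\perp(\mathbf{x})\cdot\mathbf{f}(\mathbf{x}+t\mathbf{u}(\mathbf{x}))\,dt$, and the first moments $\mathcal{L}^1_0\mathbf{f}(\mathbf{x})=-\int_0^\infty t\,\mathbf{u}(\mathbf{x})\cdot\mathbf{f}(\mathbf{x}+t\mathbf{u}(\mathbf{x}))\,dt$, $\mathcal{T}^1_0\mathbf{f}(\mathbf{x})=-\int_0^\infty t\,\mathbf{u}^\perp(\mathbf{x})\cdot\mathbf{f}(\mathbf{x}+t\mathbf{u}(\mathbf{x}))\,dt$.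 *)

theory Defs
  imports "HOL-Analysis.Analysis"
begin

type_synonym pt = "real \<times> real"

definition perp :: "pt \<Rightarrow> pt" where
  "perp a = (- snd a, fst a)"

definition C1_map :: "('a::real_normed_vector \<Rightarrow> 'b::real_normed_vector) \<Rightarrow> bool" where
  "C1_map f \<longleftrightarrow> (\<exists>Df :: 'a \<Rightarrow> ('a \<Rightarrow>\<^sub>L 'b).
      (\<forall>x. (f has_derivative blinfun_apply (Df x)) (at x)) \<and> continuous_on UNIV Df)"

definition C2_map :: "('a::real_normed_vector \<Rightarrow> 'b::real_normed_vector) \<Rightarrow> bool" where
  "C2_map f \<longleftrightarrow> (\<exists>Df :: 'a \<Rightarrow> ('a \<Rightarrow>\<^sub>L 'b).
      (\<forall>x. (f has_derivative blinfun_apply (Df x)) (at x)) \<and> C1_map Df)"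

definition C2c_disc :: "(pt \<Rightarrow> pt) \<Rightarrow> bool" where
  "C2c_disc f \<longleftrightarrow> C2_map f \<and> compact (closure {x. f x \<noteq> 0})
      \<and> closure {x. f x \<noteq> 0} \<subseteq> ball 0 1"

definition L0 :: "(pt \<Rightarrow> pt) \<Rightarrow> (pt \<Rightarrow> pt) \<Rightarrow> pt \<Rightarrow> real" where
  "L0 u f x = - integral {0..} (\<lambda>t. u x \<bullet> f (x + t *\<^sub>R u x))"

definition T0 :: "(pt \<Rightarrow> pt) \<Rightarrow> (pt \<Rightarrow> pt) \<Rightarrow> pt \<Rightarrow> real" where
  "T0 u f x = - integral {0..} (\<lambda>t. perp (u x) \<bullet> f (x + t *\<^sub>R u x))"

definition L1 :: "(pt \<Rightarrow> pt) \<Rightarrow> (pt \<Rightarrow> pt) \<Rightarrow> pt \<Rightarrow> real" where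
  "L1 u f x = - integral {0..} (\<lambda>t. t * (u x \<bullet> f (x + t *\<^sub>R u x)))"

definition T1 :: "(pt \<Rightarrow> pt) \<Rightarrow> (pt \<Rightarrow> pt) \<Rightarrow> pt \<Rightarrow> real" where
  "T1 u f x = - integral {0..} (\<lambda>t. t * (perp (u x) \<bullet> f (x + t *\<^sub>R u x)))"

end

theory Submission
  imports Defs
begin

text \<open>Along the ray \<open>x + \<tau> u(x)\<close>, \<open>\<tau> \<ge> 0\<close>, both \<open>u\<close> and the weight \<open>W\<close> (\<open>u\<close> or \<open>u\<^sup>\<perp>\<close>) are
  constant. Hence the data at the point \<open>x + s u(x)\<close> are the tail integrals
  \<open>\<integral>\<^sub>s\<^sup>\<infinity> \<psi>(\<tau>) d\<tau>\<close> and \<open>\<integral>\<^sub>s\<^sup>\<infinity> (\<tau> - s) \<psi>(\<tau>) d\<tau>\<close> of the single profile \<open>\<psi>(\<tau>) = W(x) \<cdot> f(x + \<tau> u(x))\<close>,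
  and by linearity it suffices to compare the data of \<open>f - g\<close> with zero. The derivative in \<open>s\<close>
  of the first tail is \<open>-\<psi>(s)\<close>, so if all first tails vanish then \<open>\<psi> = 0\<close> and every moment
  vanishes; the derivative of the moment tail is minus the first tail, so if all moment tails
  vanish then so do all first tails.\<close>

lemma has_real_derivative_zero_if_vanishing_on_Icc:
  fixes f :: "real \<Rightarrow> real"
  assumes "(f has_real_derivative D) (at x within {a..b})"
    and "a < b" "x \<in> {a..b}" "\<forall>y\<in>{a..b}. f y = 0"
  shows "D = 0"
proof -
  have "((\<lambda>_. 0) has_real_derivative D) (at x within {a..b})"
    using assms(1) by (rule has_field_derivative_transform_within[OF _ zero_less_one])
      (use assms(3,4) in auto)
  moreover have "at x within {a..b} \<noteq> bot"
    using assms(2,3) by (auto simp: trivial_limit_within)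
  ultimately show ?thesis
    using has_field_derivative_unique DERIV_const by blast
qed

lemma zero_if_tail_integrals_zero:
  fixes \<psi> :: "real \<Rightarrow> real"
  assumes "continuous_on {a..b} \<psi>" "a < b" "\<forall>s\<in>{a..b}. integral {s..b} \<psi> = 0" "x \<in> {a..b}"
  shows "\<psi> x = 0"
proof -
  have "- \<psi> x = 0"
    using integral_has_real_derivative'[OF assms(1,4)]
    by (rule has_real_derivative_zero_if_vanishing_on_Icc) (use assms in auto)
  then show ?thesis
    by simp
qed

lemma has_real_derivative_first_moment_tail:
  fixes \<psi> :: "real \<Rightarrow> real"
  assumes \<psi>: "continuous_on {a..b} \<psi>" and x: "x \<in> {a..b}"
  shows "((\<lambda>s. integral {s..b} (\<lambda>\<tau>. (\<tau> - s) * \<psi> \<tau>)) has_real_derivative - integral {x..b} \<psi>)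
           (at x within {a..b})"
proof -
  have moment_split: "integral {s..b} (\<lambda>\<tau>. (\<tau> - s) * \<psi> \<tau>)
      = integral {s..b} (\<lambda>\<tau>. \<tau> * \<psi> \<tau>) - s * integral {s..b} \<psi>" if "s \<in> {a..b}" for s
  proof -
    have "continuous_on {s..b} \<psi>"
      using \<psi> by (rule continuous_on_subset) (use that in auto)
    then have "\<psi> integrable_on {s..b}" "(\<lambda>\<tau>. \<tau> * \<psi> \<tau>) integrable_on {s..b}"
      by (auto intro!: integrable_continuous_real continuous_intros)
    then show ?thesis
      using integrable_on_cmult_left[of \<psi> _ s] by (simp add: left_diff_distrib integral_diff)
  qed
  have "((\<lambda>s. integral {s..b} (\<lambda>\<tau>. \<tau> * \<psi> \<tau>)) has_real_derivative - (x * \<psi> x)) (at x within {a..b})"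
    using \<psi> x by (intro integral_has_real_derivative' continuous_intros)
  moreover have "((\<lambda>s. s * integral {s..b} \<psi>) has_real_derivative
      1 * integral {x..b} \<psi> + - \<psi> x * x) (at x within {a..b})"
    by (rule DERIV_mult[OF DERIV_ident integral_has_real_derivative'[OF \<psi> x]])
  ultimately have "((\<lambda>s. integral {s..b} (\<lambda>\<tau>. \<tau> * \<psi> \<tau>) - s * integral {s..b} \<psi>) has_real_derivative
          - integral {x..b} \<psi>) (at x within {a..b})"
    using DERIV_diff by fastforce
  then show ?thesis
    by (rule has_field_derivative_transform_within[OF _ zero_less_one x]) (simp add: moment_split)
qed

lemma tail_integral_zero_if_first_moment_tails_zero:
  fixes \<psi> :: "real \<Rightarrow> real"
  assumes "continuous_on {a..b} \<psi>" "a < b"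
    and "\<forall>s\<in>{a..b}. integral {s..b} (\<lambda>\<tau>. (\<tau> - s) * \<psi> \<tau>) = 0" "x \<in> {a..b}"
  shows "integral {x..b} \<psi> = 0"
proof -
  have "- integral {x..b} \<psi> = 0"
    using has_real_derivative_first_moment_tail[OF assms(1,4)]
    by (rule has_real_derivative_zero_if_vanishing_on_Icc) (use assms in auto)
  then show ?thesis
    by simp
qed

lemma has_integral_tail_shift:
  fixes \<psi> :: "real \<Rightarrow> real"
  assumes "continuous_on {s..R} \<psi>" "\<forall>\<tau>\<ge>R. \<psi> \<tau> = 0" "s \<le> R"
  shows "((\<lambda>t. \<psi> (s + t)) has_integral integral {s..R} \<psi>) {0..}"
proof -
  have "(\<psi> has_integral integral {s..R} \<psi>) {s..R}"
    using assms(1) by (intro integrable_integral integrable_continuous_real)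
  then have "((\<lambda>t. \<psi> (t + s)) has_integral integral {s..R} \<psi>) {0..R - s}"
    using has_integral_shift_real_ivl[of \<psi> _ s R s] by simp
  then have restricted:
    "((\<lambda>t. if t \<in> {0..R - s} then \<psi> (t + s) else 0) has_integral integral {s..R} \<psi>) {0..}"
    by (subst has_integral_restrict) auto
  have agree: "(if t \<in> {0..R - s} then \<psi> (t + s) else 0) = \<psi> (s + t)" if "t \<in> {0..}" for t
    using assms(2) that by (auto simp: add.commute)
  show ?thesis
    by (rule iffD1[OF has_integral_cong[OF agree] restricted])
qed

definition ray_profile :: "('a::real_inner \<Rightarrow> 'a) \<Rightarrow> ('a \<Rightarrow> 'a) \<Rightarrow> ('a \<Rightarrow> 'a) \<Rightarrow> 'a \<Rightarrow> real \<Rightarrow> real"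
  where "ray_profile u W f x t = W x \<bullet> f (x + t *\<^sub>R u x)"

lemma ray_profile_shift:
  assumes "\<forall>x. \<forall>t\<ge>0. u (x + t *\<^sub>R u x) = u x" "\<forall>x. \<forall>t\<ge>0. W (x + t *\<^sub>R u x) = W x" "0 \<le> s"
  shows "ray_profile u W f (x + s *\<^sub>R u x) t = ray_profile u W f x (s + t)"
  using assms by (simp add: ray_profile_def scaleR_add_left add.assoc)

lemma continuous_on_ray_profile:
  assumes "continuous_on UNIV f"
  shows "continuous_on S (ray_profile u W f x)"
  unfolding ray_profile_def
  by (intro continuous_intros continuous_on_compose2[OF assms]) auto

lemma ray_profile_vanishes_beyond:
  assumes "norm (u x) = 1" "\<forall>y. r \<le> norm y \<longrightarrow> f y = 0" "norm x + r \<le> R"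
  shows "\<forall>\<tau>\<ge>R. ray_profile u W f x \<tau> = 0"
proof (intro allI impI)
  fix \<tau> assume "R \<le> \<tau>"
  have "\<tau> - norm x \<le> norm (\<tau> *\<^sub>R u x) - norm x"
    using assms(1) by simp
  also have "\<dots> \<le> norm (x + \<tau> *\<^sub>R u x)"
    using norm_diff_ineq[of "\<tau> *\<^sub>R u x" x] by (simp add: add.commute)
  finally have "f (x + \<tau> *\<^sub>R u x) = 0"
    using assms(2,3) \<open>R \<le> \<tau>\<close> by simp
  then show "ray_profile u W f x \<tau> = 0"
    by (simp add: ray_profile_def)
qed

lemma integrable_ray_profile:
  assumes "norm (u x) = 1" "continuous_on UNIV f" "\<forall>y. r \<le> norm y \<longrightarrow> f y = 0"
  shows "ray_profile u W f x integrable_on {0..}"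
    and "(\<lambda>t. t * ray_profile u W f x t) integrable_on {0..}"
proof -
  have R: "0 \<le> norm x + \<bar>r\<bar>" "norm x + r \<le> norm x + \<bar>r\<bar>"
    by auto
  note vanish = ray_profile_vanishes_beyond[where u = u and x = x, OF assms(1,3) R(2)]
  show "ray_profile u W f x integrable_on {0..}"
    using has_integral_tail_shift[OF continuous_on_ray_profile[OF assms(2)] vanish R(1)]
    by (auto intro: has_integral_integrable)
  have cont: "continuous_on {0..norm x + \<bar>r\<bar>} (\<lambda>\<tau>. \<tau> * ray_profile u W f x \<tau>)"
    by (intro continuous_intros continuous_on_ray_profile assms(2))
  have zero: "\<forall>\<tau>\<ge>norm x + \<bar>r\<bar>. \<tau> * ray_profile u W f x \<tau> = 0"
    using vanish by simp
  show "(\<lambda>t. t * ray_profile u W f x t) integrable_on {0..}"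
    using has_integral_integrable[OF has_integral_tail_shift[OF cont zero R(1)]] by simp
qed

lemma has_integral_ray_profile_from_shifted_point:
  assumes inv: "\<forall>x. \<forall>t\<ge>0. u (x + t *\<^sub>R u x) = u x" "\<forall>x. \<forall>t\<ge>0. W (x + t *\<^sub>R u x) = W x"
    and "norm (u x) = 1" "continuous_on UNIV f" "\<forall>y. r \<le> norm y \<longrightarrow> f y = 0"
    and s: "0 \<le> s" "s \<le> R" and R: "norm x + r \<le> R"
  shows "(ray_profile u W f (x + s *\<^sub>R u x) has_integral integral {s..R} (ray_profile u W f x)) {0..}"
    and "((\<lambda>t. t * ray_profile u W f (x + s *\<^sub>R u x) t) has_integral
           integral {s..R} (\<lambda>\<tau>. (\<tau> - s) * ray_profile u W f x \<tau>)) {0..}"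
proof -
  note vanish = ray_profile_vanishes_beyond[where u = u and x = x, OF assms(3,5) R]
  have shift: "ray_profile u W f (x + s *\<^sub>R u x) = (\<lambda>t. ray_profile u W f x (s + t))"
    using ray_profile_shift[OF inv s(1)] by blast
  show "(ray_profile u W f (x + s *\<^sub>R u x) has_integral integral {s..R} (ray_profile u W f x)) {0..}"
    using has_integral_tail_shift[OF continuous_on_ray_profile[OF assms(4)] vanish s(2)]
    by (simp add: shift)
  have "continuous_on {s..R} (\<lambda>\<tau>. (\<tau> - s) * ray_profile u W f x \<tau>)"
    by (intro continuous_intros continuous_on_ray_profile assms(4))
  then show "((\<lambda>t. t * ray_profile u W f (x + s *\<^sub>R u x) t) has_integral
           integral {s..R} (\<lambda>\<tau>. (\<tau> - s) * ray_profile u W f x \<tau>)) {0..}"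
    using has_integral_tail_shift[of s R "\<lambda>\<tau>. (\<tau> - s) * ray_profile u W f x \<tau>"] vanish s(2)
    by (simp add: shift)
qed

lemma ray_integrals_vanish_iff_first_moments_vanish:
  assumes unit: "\<forall>x. norm (u x) = 1"
    and inv: "\<forall>x. \<forall>t\<ge>0. u (x + t *\<^sub>R u x) = u x" "\<forall>x. \<forall>t\<ge>0. W (x + t *\<^sub>R u x) = W x"
    and h: "continuous_on UNIV h" "\<forall>y. r \<le> norm y \<longrightarrow> h y = 0"
  shows "(\<forall>x. integral {0..} (ray_profile u W h x) = 0)
     \<longleftrightarrow> (\<forall>x. integral {0..} (\<lambda>t. t * ray_profile u W h x t) = 0)"
proof -
  define R where "R x = norm x + \<bar>r\<bar> + 1" for x :: 'a
  have R: "0 < R x" "0 \<le> R x" "norm x + r \<le> R x" for x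
    by (auto simp: R_def add_nonneg_pos)
  note shifted = has_integral_ray_profile_from_shifted_point[OF inv spec[OF unit] h _ _ R(3),
      THEN integral_unique]
  show ?thesis
  proof
    assume tails: "\<forall>x. integral {0..} (ray_profile u W h x) = 0"
    have "ray_profile u W h x 0 = 0" for x
      by (rule zero_if_tail_integrals_zero[OF continuous_on_ray_profile[OF h(1)] R(1)])
        (use tails shifted(1) R(2) in auto)
    then have vanishing: "ray_profile u W h x t = 0" if "0 \<le> t" for x t
      using ray_profile_shift[OF inv that, of h x 0] by simp
    show "\<forall>x. integral {0..} (\<lambda>t. t * ray_profile u W h x t) = 0"
      by (auto intro!: integral_unique has_integral_is_0 simp: vanishing)
  next
    assume moments: "\<forall>x. integral {0..} (\<lambda>t. t * ray_profile u W h x t) = 0"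
    have "integral {0..R x} (ray_profile u W h x) = 0" for x
      by (rule tail_integral_zero_if_first_moment_tails_zero[OF continuous_on_ray_profile[OF h(1)] R(1)])
        (use moments shifted(2) R(2) in auto)
    then show "\<forall>x. integral {0..} (ray_profile u W h x) = 0"
      using shifted(1)[OF order_refl R(2)] by simp
  qed
qed

lemma ray_integrals_eq_iff_first_moments_eq:
  assumes unit: "\<forall>x. norm (u x) = 1"
    and inv: "\<forall>x. \<forall>t\<ge>0. u (x + t *\<^sub>R u x) = u x" "\<forall>x. \<forall>t\<ge>0. W (x + t *\<^sub>R u x) = W x"
    and f: "continuous_on UNIV f" "\<forall>y. r \<le> norm y \<longrightarrow> f y = 0"
    and g: "continuous_on UNIV g" "\<forall>y. r \<le> norm y \<longrightarrow> g y = 0"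
  shows "(\<forall>x. integral {0..} (ray_profile u W f x) = integral {0..} (ray_profile u W g x))
     \<longleftrightarrow> (\<forall>x. integral {0..} (\<lambda>t. t * ray_profile u W f x t)
              = integral {0..} (\<lambda>t. t * ray_profile u W g x t))"
proof -
  define h where "h y = f y - g y" for y
  have h: "continuous_on UNIV h" "\<forall>y. r \<le> norm y \<longrightarrow> h y = 0"
    using f g by (auto simp: h_def intro: continuous_intros)
  have profile_h: "ray_profile u W h x = (\<lambda>t. ray_profile u W f x t - ray_profile u W g x t)" for x
    by (simp add: fun_eq_iff ray_profile_def h_def inner_diff_right)
  note integrable = integrable_ray_profile[where u = u, OF spec[OF unit]]
  have "integral {0..} (ray_profile u W h x)
      = integral {0..} (ray_profile u W f x) - integral {0..} (ray_profile u W g x)"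
    "integral {0..} (\<lambda>t. t * ray_profile u W h x t)
      = integral {0..} (\<lambda>t. t * ray_profile u W f x t) - integral {0..} (\<lambda>t. t * ray_profile u W g x t)"
    for x
    using integral_diff[OF integrable(1)[OF f] integrable(1)[OF g]]
      integral_diff[OF integrable(2)[OF f] integrable(2)[OF g]]
    by (simp_all add: profile_h right_diff_distrib)
  then show ?thesis
    using ray_integrals_vanish_iff_first_moments_vanish[OF unit inv h] by simp
qed

lemma C2c_disc_continuous:
  assumes "C2c_disc f"
  shows "continuous_on UNIV f"
proof -
  from assms obtain Df where "\<forall>x. (f has_derivative blinfun_apply (Df x)) (at x)"
    unfolding C2c_disc_def C2_map_def by blast
  then show ?thesis
    by (meson continuous_at_imp_continuous_on has_derivative_continuous)
qed

lemma C2c_disc_vanishes_outside_disc: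
  assumes "C2c_disc f"
  shows "\<forall>y. 1 \<le> norm y \<longrightarrow> f y = 0"
  using assms closure_subset[of "{x. f x \<noteq> 0}"] unfolding C2c_disc_def by force

theorem lemma4p1:
  fixes u :: "pt \<Rightarrow> pt"
  assumes "C1_map u"
    and "\<forall>x. norm (u x) = 1"
    and "\<forall>x. \<forall>t\<ge>0. u (x + t *\<^sub>R u x) = u x"
  shows "\<forall>f g. C2c_disc f \<longrightarrow> C2c_disc g \<longrightarrow>
           ((L0 u f = L0 u g \<longleftrightarrow> L1 u f = L1 u g) \<and>
            (T0 u f = T0 u g \<longleftrightarrow> T1 u f = T1 u g))"
proof (intro allI impI)
  fix f g assume "C2c_disc f" "C2c_disc g"
  note f = C2c_disc_continuous[OF \<open>C2c_disc f\<close>] C2c_disc_vanishes_outside_disc[OF \<open>C2c_disc f\<close>]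
  note g = C2c_disc_continuous[OF \<open>C2c_disc g\<close>] C2c_disc_vanishes_outside_disc[OF \<open>C2c_disc g\<close>]
  have perp_inv: "\<forall>x. \<forall>t\<ge>0. perp (u (x + t *\<^sub>R u x)) = perp (u x)"
    using assms(3) by simp
  have "L0 u f = L0 u g \<longleftrightarrow> L1 u f = L1 u g"
    using ray_integrals_eq_iff_first_moments_eq[OF assms(2,3,3) f g]
    by (simp add: L0_def L1_def ray_profile_def[abs_def] fun_eq_iff)
  moreover have "T0 u f = T0 u g \<longleftrightarrow> T1 u f = T1 u g"
    using ray_integrals_eq_iff_first_moments_eq[OF assms(2,3) perp_inv f g]
    by (simp add: T0_def T1_def ray_profile_def[abs_def] fun_eq_iff)
  ultimately show "(L0 u f = L0 u g \<longleftrightarrow> L1 u f = L1 u g) \<and> (T0 u f = T0 u g \<longleftrightarrow> T1 u f = T1 u g)"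
    by blast
qed

end
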